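(* Assume $n_1,n_2\in(0,4)$ and (IE). Then for all $\varepsilon\in(0,1)$ and any $t\in(0,T_{max,\varepsilon})$, $$\frac12\frac{d}{dt}\int_\Omega u_{\varepsilon x}^2+\varepsilon\int_\Omega\frac{u_\varepsilon^4}{u_\varepsilon^{4-n_1}+\varepsilon}u_{\varepsilon xxx}^2+\frac{D_1}{2}\int_\Omega u_{\varepsilon xx}^2\le\chi_1\int_\Omega\Big(\frac{u_\varepsilon^{5-n_1}}{u_\varepsilon^{4-n_1}+\varepsilon}v_{\varepsilon x}\Big)_xu_{\varepsilon xx}+3\lambda_1\int_\Omega u_{\varepsilon x}^2+\frac{a_1^2}{2D_1}\int_\Omega u_\varepsilon^2v_\varepsilon^2$$ and $$\frac12\frac{d}{dt}\int_\Omega v_{\varepsilon x}^2+\varepsilon\int_\Omega\frac{v_\varepsilon^4}{v_\varepsilon^{4-n_2}+\varepsilon}v_{\varepsilon xxx}^2+\frac{D_2}{2}\int_\Omega v_{\varepsilon xx}^2\le-\chi_2\int_\Omega\Big(\frac{v_\varepsilon^{5-n_2}}{v_\varepsilon^{4-n_2}+\varepsilon}u_{\varepsilon x}\Big)_xv_{\varepsilon xx}+3\lambda_2\int_\Omega v_{\varepsilon x}^2+\frac{a_2^2}{2D_2}\int_\Omega u_\varepsilon^2v_\varepsilon^2.$$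
   Context: Let $\Omega\subset\mathbb{R}$ be a bounded open interval, $D_i,a_i,\lambda_i,\chi_i>0$ ($i=1,2$), and fix $\alpha\in(0,\frac12]$. Assumption (IE): $u_0,v_0\in W^{1,2}(\Omega)$ with $u_0>0,v_0>0$ in $\overline\Omega$; for each $\varepsilon\in(0,1)$, $u_{0\varepsilon},v_{0\varepsilon}\in C^5(\overline\Omega)$ with $u_{0\varepsilon x}=u_{0\varepsilon xxx}=v_{0\varepsilon x}=v_{0\varepsilon xxx}=0$ on $\partial\Omega$; $\frac12\inf_\Omega u_0\le u_{0\varepsilon}\le u_0+1$, $\frac12\inf_\Omega v_0\le v_{0\varepsilon}\le v_0+1$ in $\Omega$; $\int_\Omega u_{0\varepsilon x}^2\le\int_\Omega u_{0x}^2+1$, $\int_\Omega v_{0\varepsilon x}^2\le\int_\Omega v_{0x}^2+1$; $u_{0\varepsilon}\to u_0$, $v_{0\varepsilon}\to v_0$ a.e. as $\varepsilon\searrow0$. Approximating problem: $u_t=-\varepsilon\big(\frac{u^4}{u^{4-n_1}+\varepsilon}u_{xxx}\big)_x+\varepsilon^{\alpha/2}(u^{-\alpha}u_x)_x+D_1u_{xx}-\chi_1\big(\frac{u^{5-n_1}}{u^{4-n_1}+\varepsilon}v_x\big)_x+\frac{3u^3}{3u^2+\varepsilon}(\lambda_1-u+a_1v)$, $v_t=-\varepsilon\big(\frac{v^4}{v^{4-n_2}+\varepsilon}v_{xxx}\big)_x+\varepsilon^{\alpha/2}(v^{-\alpha}v_x)_x+D_2v_{xx}+\chi_2\big(\frac{v^{5-n_2}}{v^{4-n_2}+\varepsilon}u_x\big)_x+\frac{3v^3}{3v^2+\varepsilon}(\lambda_2-v-a_2u)$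 in $\Omega\times(0,\infty)$, $u_x=v_x=u_{xxx}=v_{xxx}=0$ on $\partial\Omega$, $u(\cdot,0)=u_{0\varepsilon}$, $v(\cdot,0)=v_{0\varepsilon}$. For $n_i\in(0,4)$ and each $\varepsilon$ it has a classical solution $(u_\varepsilon,v_\varepsilon)$, positive in $\overline\Omega\times[0,T_{max,\varepsilon})$, belonging to $\bigcap_{s\in(3/2,2)}C^0([0,T_{max,\varepsilon});W^{s,2}(\Omega))\cap C^{4,1}(\overline\Omega\times(0,T_{max,\varepsilon}))$, where $T_{max,\varepsilon}\in(0,\infty]$ is maximal: either $T_{max,\varepsilon}=\infty$ or $\limsup_{t\nearrow T_{max,\varepsilon}}\{\|u_\varepsilon(\cdot,t)\|_{W^{2,2}}+\|1/u_\varepsilon(\cdot,t)\|_{L^\infty}+\|v_\varepsilon(\cdot,t)\|_{W^{2,2}}+\|1/v_\varepsilon(\cdot,t)\|_{L^\infty}\}=\infty$. *)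

theory Defs
  imports "HOL-Analysis.Analysis"
begin

text \<open>Omega = the open interval {lo<..<hi}, closure {lo..hi}.
  Functions of space and time are written u x t.\<close>

text \<open>d 0, ..., d K are the successive derivatives (one-sided at the endpoints)
  of d 0 on the closed interval, all continuous there: d 0 is in C^K of the closure.\<close>
definition derivs_on :: "real \<Rightarrow> real \<Rightarrow> nat \<Rightarrow> (nat \<Rightarrow> real \<Rightarrow> real) \<Rightarrow> bool" where
  "derivs_on lo hi K d \<longleftrightarrow>
     (\<forall>k<K. \<forall>x\<in>{lo..hi}. (d k has_real_derivative d (Suc k) x) (at x within {lo..hi})) \<and>
     (\<forall>k\<le>K. continuous_on {lo..hi} (d k))"

text \<open>f belongs to W^{1,2}(lo,hi) (continuous representative), with weak derivative g.\<close>
definition W12_on :: "real \<Rightarrow> real \<Rightarrow> (real \<Rightarrow> real) \<Rightarrow> (real \<Rightarrow> real) \<Rightarrow> bool" where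
  "W12_on lo hi f g \<longleftrightarrow>
     g integrable_on {lo..hi} \<and> (\<lambda>x. (g x)\<^sup>2) integrable_on {lo..hi} \<and>
     (\<forall>x\<in>{lo..hi}. f x = f lo + integral {lo..x} g)"

text \<open>Assumption (IE) for one component: initial datum w0 (with weak derivative w0'),
  and the approximating family w0e eps.\<close>
definition IE_component :: "real \<Rightarrow> real \<Rightarrow> (real \<Rightarrow> real) \<Rightarrow> (real \<Rightarrow> real)
    \<Rightarrow> (real \<Rightarrow> real \<Rightarrow> real) \<Rightarrow> bool" where
  "IE_component lo hi w0 w0' w0e \<longleftrightarrow>
     W12_on lo hi w0 w0' \<and> (\<forall>x\<in>{lo..hi}. w0 x > 0) \<and>
     (\<forall>e\<in>{0<..<1}. \<exists>d. d 0 = w0e e \<and> derivs_on lo hi 5 d \<and>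
        d 1 lo = 0 \<and> d 1 hi = 0 \<and> d 3 lo = 0 \<and> d 3 hi = 0 \<and>
        (\<forall>x\<in>{lo<..<hi}. Inf (w0 ` {lo<..<hi}) / 2 \<le> w0e e x \<and> w0e e x \<le> w0 x + 1) \<and>
        integral {lo..hi} (\<lambda>x. (d 1 x)\<^sup>2) \<le> integral {lo..hi} (\<lambda>x. (w0' x)\<^sup>2) + 1) \<and>
     (AE x in lebesgue_on {lo<..<hi}. ((\<lambda>e. w0e e x) \<longlongrightarrow> w0 x) (at_right 0))"

text \<open>u is in C^{4,1}(closure Omega \<times> (0,T)) with x-derivatives ux, uxx, uxxx, uxxxx
  (one-sided at the endpoints) and time derivative ut.\<close>
definition C41_on :: "real \<Rightarrow> real \<Rightarrow> real \<Rightarrow> (real \<Rightarrow> real \<Rightarrow> real) \<Rightarrow> (real \<Rightarrow> real \<Rightarrow> real)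
    \<Rightarrow> (real \<Rightarrow> real \<Rightarrow> real) \<Rightarrow> (real \<Rightarrow> real \<Rightarrow> real) \<Rightarrow> (real \<Rightarrow> real \<Rightarrow> real)
    \<Rightarrow> (real \<Rightarrow> real \<Rightarrow> real) \<Rightarrow> bool" where
  "C41_on lo hi T u ux uxx uxxx uxxxx ut \<longleftrightarrow>
     (\<forall>t\<in>{0<..<T}. \<forall>x\<in>{lo..hi}.
        ((\<lambda>y. u y t) has_real_derivative ux x t) (at x within {lo..hi}) \<and>
        ((\<lambda>y. ux y t) has_real_derivative uxx x t) (at x within {lo..hi}) \<and>
        ((\<lambda>y. uxx y t) has_real_derivative uxxx x t) (at x within {lo..hi}) \<and>
        ((\<lambda>y. uxxx y t) has_real_derivative uxxxx x t) (at x within {lo..hi}) \<and>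
        ((\<lambda>s. u x s) has_real_derivative ut x t) (at t)) \<and>
     (\<forall>f\<in>{u, ux, uxx, uxxx, uxxxx, ut}.
        continuous_on ({lo..hi} \<times> {0<..<T}) (\<lambda>(x, t). f x t))"

text \<open>Flux (so that the equation reads w_t = (flux)_x + reaction) of one component of the
  approximating problem; sg = -1 for the u-equation (-chi_1) and sg = 1 for the v-equation.\<close>
definition approx_flux :: "real \<Rightarrow> real \<Rightarrow> real \<Rightarrow> real \<Rightarrow> real \<Rightarrow> real
    \<Rightarrow> real \<Rightarrow> real \<Rightarrow> real \<Rightarrow> real \<Rightarrow> real" where
  "approx_flux e alpha n D chi sg w wx wxxx zx =
     - e * (w ^ 4 / (w powr (4 - n) + e) * wxxx)
     + e powr (alpha / 2) * (w powr (- alpha) * wx)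
     + D * wx
     + sg * chi * (w powr (5 - n) / (w powr (4 - n) + e) * zx)"

definition approx_reaction :: "real \<Rightarrow> real \<Rightarrow> real \<Rightarrow> real" where
  "approx_reaction e w r = 3 * w ^ 3 / (3 * w\<^sup>2 + e) * r"

definition approx_solution ::
  "real \<Rightarrow> real \<Rightarrow> real \<Rightarrow> real \<Rightarrow> real \<Rightarrow> real \<Rightarrow> real \<Rightarrow> real \<Rightarrow> real \<Rightarrow> real \<Rightarrow> real \<Rightarrow> real \<Rightarrow> real \<Rightarrow> real \<Rightarrow> real \<Rightarrow> 
   (real \<Rightarrow> real) \<Rightarrow> (real \<Rightarrow> real) \<Rightarrow>
   (real \<Rightarrow> real \<Rightarrow> real) \<Rightarrow> (real \<Rightarrow> real \<Rightarrow> real) \<Rightarrow> (real \<Rightarrow> real \<Rightarrow> real) \<Rightarrow> (real \<Rightarrow> real \<Rightarrow> real) \<Rightarrow> (real \<Rightarrow> real \<Rightarrow> real) \<Rightarrow> (real \<Rightarrow> real \<Rightarrow> real) \<Rightarrow> (real \<Rightarrow> real \<Rightarrow> real) \<Rightarrow> (real \<Rightarrow> real \<Rightarrow> real) \<Rightarrow> (real \<Rightarrow> real \<Rightarrow> real) \<Rightarrow> (real \<Rightarrow> real \<Rightarrow> real) \<Rightarrow> (real \<Rightarrow> real \<Rightarrow> real) \<Rightarrow> (real \<Rightarrow> real \<Rightarrow> real) \<Rightarrow> bool" where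
  "approx_solution lo hi alpha e n1 n2 D1 D2 a1 a2 lam1 lam2 chi1 chi2 T u0 v0
     u ux uxx uxxx uxxxx ut v vx vxx vxxx vxxxx vt \<longleftrightarrow>
     C41_on lo hi T u ux uxx uxxx uxxxx ut \<and> C41_on lo hi T v vx vxx vxxx vxxxx vt \<and>
     continuous_on ({lo..hi} \<times> {0..<T}) (\<lambda>(x, t). u x t) \<and>
     continuous_on ({lo..hi} \<times> {0..<T}) (\<lambda>(x, t). v x t) \<and>
     (\<forall>x\<in>{lo..hi}. \<forall>t\<in>{0..<T}. u x t > 0 \<and> v x t > 0) \<and>
     (\<forall>x\<in>{lo..hi}. u x 0 = u0 x \<and> v x 0 = v0 x) \<and>
     (\<forall>t\<in>{0<..<T}. ux lo t = 0 \<and> ux hi t = 0 \<and> vx lo t = 0 \<and> vx hi t = 0 \<and>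
        uxxx lo t = 0 \<and> uxxx hi t = 0 \<and> vxxx lo t = 0 \<and> vxxx hi t = 0) \<and>
     (\<forall>x\<in>{lo<..<hi}. \<forall>t\<in>{0<..<T}.
        ((\<lambda>y. approx_flux e alpha n1 D1 chi1 (-1) (u y t) (ux y t) (uxxx y t) (vx y t))
           has_real_derivative
           (ut x t - approx_reaction e (u x t) (lam1 - u x t + a1 * v x t))) (at x) \<and>
        ((\<lambda>y. approx_flux e alpha n2 D2 chi2 1 (v y t) (vx y t) (vxxx y t) (ux y t))
           has_real_derivative
           (vt x t - approx_reaction e (v x t) (lam2 - v x t - a2 * u x t))) (at x))"

end

theory Submission
  imports Defs
begin

(* Testing the equation for w against -w_xx, integrating by parts (every boundary term vanishes
   because w_x = w_xxx = 0 on the boundary) and using that the time derivative of the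
   Dirichlet energy is -2 \<integral> w_t w_xx gives (1/2) d/dt \<integral> w_x^2 = \<integral> F w_xxx - \<integral> R w_xx,
   where F is the flux and R the reaction term.  In \<integral> F w_xxx the thin-film part is the
   dissipation, linear diffusion gives -D \<integral> w_xx^2, and the singular diffusion term
   \<integral> w^-alpha w_x w_xxx is nonpositive: by parts it equals alpha K - J, a second integration
   by parts gives (alpha + 1) I = 3 K, and expanding 0 \<le> \<integral> w^-alpha (w_xx - beta w_x^2 / w)^2
   with beta = (alpha + 1) / 3 yields beta K \<le> J, hence alpha K \<le> J as alpha \<le> 1/2.
   The reaction term needs one more integration by parts and Young's inequality, together with
   0 \<le> g \<le> w and 0 \<le> g' \<le> 3 for g(w) = 3 w^3 / (3 w^2 + e). *)

lemma has_integral_by_parts_vanishing_boundary: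
  fixes f g f' g' :: "real \<Rightarrow> real"
  assumes "a \<le> b" "continuous_on {a..b} f" "continuous_on {a..b} g"
    and "\<And>x. x \<in> {a<..<b} \<Longrightarrow> (f has_real_derivative f' x) (at x)"
    and "\<And>x. x \<in> {a<..<b} \<Longrightarrow> (g has_real_derivative g' x) (at x)"
    and "(\<lambda>x. f x * g' x) integrable_on {a..b}"
    and "f a * g a = 0" "f b * g b = 0"
  shows "((\<lambda>x. f' x * g x) has_integral - integral {a..b} (\<lambda>x. f x * g' x)) {a..b}"
  by (rule integration_by_parts_interior[OF bounded_bilinear_mult, where y = "- integral {a..b} (\<lambda>x. f x * g' x)"])
     (use assms in \<open>auto simp: has_real_derivative_iff_has_vector_derivative[symmetric]\<close>)

lemma continuous_on_slice:
  fixes f :: "'a::topological_space \<Rightarrow> 'b::topological_space \<Rightarrow> 'c::topological_space"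
  assumes "continuous_on (S \<times> U) (\<lambda>(x, s). f x s)" "s \<in> U"
  shows "continuous_on S (\<lambda>x. f x s)"
  by (rule continuous_on_compose2[OF assms(1), where f = "\<lambda>x. (x, s)", simplified])
     (use assms(2) in \<open>auto intro!: continuous_intros\<close>)

lemma has_real_derivative_symmetric_diagonal:
  fixes \<Phi> \<psi> :: "real \<Rightarrow> real \<Rightarrow> real"
  assumes "open U" "convex U" "t \<in> U"
    and symmetric: "\<And>a b. \<Phi> a b = \<Phi> b a"
    and partial_deriv: "\<And>a b. a \<in> U \<Longrightarrow> b \<in> U \<Longrightarrow> ((\<lambda>b. \<Phi> a b) has_real_derivative \<psi> a b) (at b)"
    and partial_deriv_cont: "continuous_on (U \<times> U) (\<lambda>(a, b). \<psi> a b)"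
  shows "((\<lambda>s. \<Phi> s s) has_real_derivative 2 * \<psi> t t) (at t)"
proof -
  have "((\<lambda>(a, b). \<Phi> a b) has_derivative (\<lambda>(h, k). \<psi> t t * h + blinfun_mult_right (\<psi> t t) k))
      (at (t, t) within U \<times> U)"
  proof (rule has_derivative_partialsI[where fy = "\<lambda>a b. blinfun_mult_right (\<psi> a b)"])
    show "((\<lambda>a. \<Phi> a t) has_derivative (*) (\<psi> t t)) (at t within U)"
      using partial_deriv[OF \<open>t \<in> U\<close> \<open>t \<in> U\<close>]
      by (simp add: symmetric[of _ t] has_field_derivative_def has_derivative_at_withinI)
    show "((\<lambda>b. \<Phi> a b) has_derivative blinfun_apply (blinfun_mult_right (\<psi> a b))) (at b within U)"
      if "a \<in> U" "b \<in> U" for a b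
      using partial_deriv[OF that] by (simp add: has_field_derivative_def has_derivative_at_withinI)
    show "continuous (at (t, t) within U \<times> U) (\<lambda>(a, b). blinfun_mult_right (\<psi> a b))"
      using bounded_linear.continuous_on[OF bounded_linear_blinfun_mult_right partial_deriv_cont] \<open>t \<in> U\<close>
      by (simp add: case_prod_beta' continuous_on_eq_continuous_within)
  qed (use \<open>t \<in> U\<close> \<open>convex U\<close> in auto)
  moreover have "at (t, t) within U \<times> U = at (t, t)"
    by (rule at_within_open) (use \<open>t \<in> U\<close> \<open>open U\<close> in \<open>auto intro: open_Times\<close>)
  ultimately have "((\<lambda>(a, b). \<Phi> a b) has_derivative (\<lambda>(h, k). \<psi> t t * h + \<psi> t t * k)) (at (t, t))"
    by (simp only: blinfun_mult_right.rep_eq)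
  from has_derivative_compose[OF has_derivative_Pair[OF has_derivative_ident has_derivative_ident] this]
  have "((\<lambda>s. \<Phi> s s) has_derivative (\<lambda>h. \<psi> t t * h + \<psi> t t * h)) (at t)"
    by simp
  then show ?thesis
    unfolding has_field_derivative_def
    by (rule has_derivative_eq_rhs) (simp add: fun_eq_iff algebra_simps)
qed

lemma has_real_derivative_integral_mult_param:
  fixes f :: "real \<Rightarrow> real" and g gt :: "real \<Rightarrow> real \<Rightarrow> real"
  assumes "open U" "convex U" "b \<in> U" "continuous_on {lo..hi} f"
    and g_deriv: "\<And>x s. x \<in> {lo..hi} \<Longrightarrow> s \<in> U \<Longrightarrow> ((\<lambda>s. g x s) has_real_derivative gt x s) (at s)"
    and g_cont: "\<And>s. s \<in> U \<Longrightarrow> continuous_on {lo..hi} (\<lambda>x. g x s)"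
    and gt_cont: "continuous_on ({lo..hi} \<times> U) (\<lambda>(x, s). gt x s)"
  shows "((\<lambda>s. integral {lo..hi} (\<lambda>x. f x * g x s)) has_real_derivative
      integral {lo..hi} (\<lambda>x. f x * gt x b)) (at b)"
proof -
  have "((\<lambda>s. integral (cbox lo hi) (\<lambda>x. f x * g x s)) has_real_derivative
      integral (cbox lo hi) (\<lambda>x. f x * gt x b)) (at b within U)"
  proof (rule leibniz_rule_field_derivative[where fx = "\<lambda>s x. f x * gt x s"])
    show "((\<lambda>s. f x * g x s) has_real_derivative f x * gt x s) (at s within U)"
      if "s \<in> U" "x \<in> cbox lo hi" for s x
      using g_deriv[of x s] that by (auto intro!: derivative_eq_intros intro: has_field_derivative_at_within)
    have "continuous_on (U \<times> {lo..hi}) (\<lambda>p. f (snd p))"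
      by (rule continuous_on_compose2[OF assms(4)]) (auto intro!: continuous_intros)
    moreover have "continuous_on (U \<times> {lo..hi}) (\<lambda>p. gt (snd p) (fst p))"
      using continuous_on_swap_args[OF gt_cont] by (simp add: case_prod_beta')
    ultimately show "continuous_on (U \<times> cbox lo hi) (\<lambda>(s, x). f x * gt x s)"
      by (auto simp: case_prod_beta' intro!: continuous_intros)
  qed (use assms(2,3,4) g_cont in \<open>auto intro!: integrable_continuous_interval continuous_intros\<close>)
  then show ?thesis
    by (simp add: at_within_open[OF \<open>b \<in> U\<close> \<open>open U\<close>])
qed

lemma continuous_on_integral_mult_params:
  fixes f g :: "real \<Rightarrow> real \<Rightarrow> real"
  assumes "continuous_on ({lo..hi} \<times> U) (\<lambda>(x, s). f x s)" "continuous_on ({lo..hi} \<times> U) (\<lambda>(x, s). g x s)"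
  shows "continuous_on (U \<times> U) (\<lambda>(a, b). integral {lo..hi} (\<lambda>x. f x a * g x b))"
proof -
  have "continuous_on ((U \<times> U) \<times> {lo..hi}) (\<lambda>q. f (snd q) (fst (fst q)))"
    by (rule continuous_on_compose2[OF assms(1), where f = "\<lambda>q. (snd q, fst (fst q))", simplified])
       (auto intro!: continuous_intros)
  moreover have "continuous_on ((U \<times> U) \<times> {lo..hi}) (\<lambda>q. g (snd q) (snd (fst q)))"
    by (rule continuous_on_compose2[OF assms(2), where f = "\<lambda>q. (snd q, snd (fst q))", simplified])
       (auto intro!: continuous_intros)
  ultimately have "continuous_on ((U \<times> U) \<times> cbox lo hi) (\<lambda>(p, x). f x (fst p) * g x (snd p))"
    by (auto simp: case_prod_beta' intro!: continuous_intros)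
  from integral_continuous_on_param[OF this] show ?thesis
    by (simp add: case_prod_beta')
qed

(* ux is not assumed differentiable in time, so instead of differentiating (ux)^2 we differentiate
   the symmetric form \<integral> ux(a) ux(b) = - \<integral> uxx(a) u(b) along the diagonal a = b. *)
lemma Dirichlet_energy_has_real_derivative:
  fixes u ux uxx ut :: "real \<Rightarrow> real \<Rightarrow> real" and U :: "real set"
  assumes "lo \<le> hi" "open U" "convex U" "t \<in> U"
    and u_deriv: "\<And>x s. x \<in> {lo..hi} \<Longrightarrow> s \<in> U \<Longrightarrow>
          ((\<lambda>y. u y s) has_real_derivative ux x s) (at x within {lo..hi})"
    and ux_deriv: "\<And>x s. x \<in> {lo..hi} \<Longrightarrow> s \<in> U \<Longrightarrow>
          ((\<lambda>y. ux y s) has_real_derivative uxx x s) (at x within {lo..hi})"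
    and ut_deriv: "\<And>x s. x \<in> {lo..hi} \<Longrightarrow> s \<in> U \<Longrightarrow> ((\<lambda>s. u x s) has_real_derivative ut x s) (at s)"
    and ux_boundary: "\<And>s. s \<in> U \<Longrightarrow> ux lo s = 0" "\<And>s. s \<in> U \<Longrightarrow> ux hi s = 0"
    and uxx_cont: "continuous_on ({lo..hi} \<times> U) (\<lambda>(x, s). uxx x s)"
    and ut_cont: "continuous_on ({lo..hi} \<times> U) (\<lambda>(x, s). ut x s)"
  shows "((\<lambda>s. integral {lo..hi} (\<lambda>x. (ux x s)\<^sup>2)) has_real_derivative
           - 2 * integral {lo..hi} (\<lambda>x. ut x t * uxx x t)) (at t)"
proof -
  define \<Phi> where "\<Phi> a b = integral {lo..hi} (\<lambda>x. ux x a * ux x b)" for a b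
  define \<psi> where "\<psi> a b = - integral {lo..hi} (\<lambda>x. uxx x a * ut x b)" for a b
  have u_cont: "continuous_on {lo..hi} (\<lambda>x. u x s)" and ux_cont: "continuous_on {lo..hi} (\<lambda>x. ux x s)"
    if "s \<in> U" for s
    unfolding continuous_on_eq_continuous_within using u_deriv ux_deriv that
    by (blast intro: DERIV_continuous)+
  have \<Phi>_by_parts: "\<Phi> a b = - integral {lo..hi} (\<lambda>x. uxx x a * u x b)" if "a \<in> U" "b \<in> U" for a b
  proof -
    have "((\<lambda>x. uxx x a * u x b) has_integral - \<Phi> a b) {lo..hi}"
      unfolding \<Phi>_def
    proof (rule has_integral_by_parts_vanishing_boundary)
      fix x assume "x \<in> {lo<..<hi}"
      then show "((\<lambda>x. ux x a) has_real_derivative uxx x a) (at x)"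
        and "((\<lambda>x. u x b) has_real_derivative ux x b) (at x)"
        using ux_deriv[of x a] u_deriv[of x b] that by (auto simp: at_within_Icc_at)
    qed (use that \<open>lo \<le> hi\<close> u_cont ux_cont ux_boundary in
         \<open>auto intro!: integrable_continuous_interval continuous_intros\<close>)
    then show ?thesis
      by (simp add: integral_unique)
  qed
  have \<Phi>_deriv: "((\<lambda>b. \<Phi> a b) has_real_derivative \<psi> a b) (at b)" if "a \<in> U" "b \<in> U" for a b
  proof -
    have "((\<lambda>b. integral {lo..hi} (\<lambda>x. uxx x a * u x b)) has_real_derivative - \<psi> a b) (at b)"
      unfolding \<psi>_def minus_minus
      using assms(2,3) that continuous_on_slice[OF uxx_cont] ut_deriv u_cont ut_cont
      by (intro has_real_derivative_integral_mult_param) auto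
    then have "((\<lambda>b. - integral {lo..hi} (\<lambda>x. uxx x a * u x b)) has_real_derivative \<psi> a b) (at b)"
      by (auto intro!: derivative_eq_intros)
    then show ?thesis
      by (rule has_field_derivative_transform_within_open[OF _ \<open>open U\<close> \<open>b \<in> U\<close>])
         (simp add: \<Phi>_by_parts \<open>a \<in> U\<close>)
  qed
  have "continuous_on (U \<times> U) (\<lambda>(a, b). \<psi> a b)"
    unfolding \<psi>_def using continuous_on_integral_mult_params[OF uxx_cont ut_cont]
    by (auto simp: case_prod_beta' intro!: continuous_intros)
  moreover have "\<Phi> a b = \<Phi> b a" for a b
    by (simp add: \<Phi>_def mult.commute)
  ultimately have "((\<lambda>s. \<Phi> s s) has_real_derivative 2 * \<psi> t t) (at t)"
    using assms(2-4) \<Phi>_deriv by (intro has_real_derivative_symmetric_diagonal) auto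
  moreover have "\<Phi> s s = integral {lo..hi} (\<lambda>x. (ux x s)\<^sup>2)" for s
    by (simp add: \<Phi>_def power2_eq_square)
  moreover have "2 * \<psi> t t = - 2 * integral {lo..hi} (\<lambda>x. ut x t * uxx x t)"
    by (simp add: \<psi>_def mult.commute)
  ultimately show ?thesis
    by simp
qed

definition reaction_gain :: "real \<Rightarrow> real \<Rightarrow> real" where
  "reaction_gain e w = 3 * w ^ 3 / (3 * w\<^sup>2 + e)"

definition reaction_gain_deriv :: "real \<Rightarrow> real \<Rightarrow> real" where
  "reaction_gain_deriv e w = 9 * w\<^sup>2 * (w\<^sup>2 + e) / (3 * w\<^sup>2 + e)\<^sup>2"

lemma approx_reaction_eq: "approx_reaction e w r = reaction_gain e w * r"
  by (simp add: approx_reaction_def reaction_gain_def)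

lemma reaction_gain_denominator_pos: "0 < e \<Longrightarrow> 0 < 3 * w\<^sup>2 + e" for e w :: real
  by (simp add: add_nonneg_pos)

lemma continuous_on_reaction_gain [continuous_intros]:
  "continuous_on S f \<Longrightarrow> 0 < e \<Longrightarrow> continuous_on S (\<lambda>x. reaction_gain e (f x))"
  and continuous_on_reaction_gain_deriv [continuous_intros]:
  "continuous_on S f \<Longrightarrow> 0 < e \<Longrightarrow> continuous_on S (\<lambda>x. reaction_gain_deriv e (f x))"
  using reaction_gain_denominator_pos
  by (auto simp: reaction_gain_def reaction_gain_deriv_def less_imp_neq[symmetric] intro!: continuous_intros)

lemma has_real_derivative_reaction_gain:
  assumes "0 < e"
  shows "(reaction_gain e has_real_derivative reaction_gain_deriv e w) (at w)"
proof -
  have "((\<lambda>w. 3 * w ^ 3 / (3 * w\<^sup>2 + e)) has_real_derivative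
      (3 * (3 * w\<^sup>2) * (3 * w\<^sup>2 + e) - 3 * w ^ 3 * (3 * (2 * w))) / (3 * w\<^sup>2 + e)\<^sup>2) (at w)"
    using reaction_gain_denominator_pos[OF assms, of w]
    by (auto intro!: derivative_eq_intros simp: power2_eq_square)
  moreover have "(3 * (3 * w\<^sup>2) * (3 * w\<^sup>2 + e) - 3 * w ^ 3 * (3 * (2 * w))) = 9 * w\<^sup>2 * (w\<^sup>2 + e)"
    by (simp add: power2_eq_square power3_eq_cube algebra_simps)
  ultimately show ?thesis
    unfolding reaction_gain_def[abs_def] reaction_gain_deriv_def by simp
qed

lemma reaction_gain_bounds:
  assumes "0 < e" "0 < w"
  shows "0 \<le> reaction_gain e w" "reaction_gain e w \<le> w"
proof -
  have "3 * w ^ 3 \<le> w * (3 * w\<^sup>2 + e)"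
    using assms by (simp add: power2_eq_square power3_eq_cube algebra_simps)
  then show "0 \<le> reaction_gain e w" "reaction_gain e w \<le> w"
    using assms reaction_gain_denominator_pos[OF assms(1), of w]
    by (simp_all add: reaction_gain_def divide_le_eq)
qed

lemma reaction_gain_deriv_bounds:
  assumes "0 < e"
  shows "0 \<le> reaction_gain_deriv e w" "reaction_gain_deriv e w \<le> 3"
proof -
  have "3 * (3 * w\<^sup>2 + e)\<^sup>2 - 9 * w\<^sup>2 * (w\<^sup>2 + e) = 18 * (w\<^sup>2)\<^sup>2 + 9 * e * w\<^sup>2 + 3 * e\<^sup>2"
    by (simp add: power2_eq_square algebra_simps)
  then have "9 * w\<^sup>2 * (w\<^sup>2 + e) \<le> 3 * (3 * w\<^sup>2 + e)\<^sup>2"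
    using assms by (smt (verit) zero_le_power2 mult_nonneg_nonneg)
  then show "0 \<le> reaction_gain_deriv e w" "reaction_gain_deriv e w \<le> 3"
    using assms reaction_gain_denominator_pos[OF assms, of w]
    by (simp_all add: reaction_gain_deriv_def divide_le_eq)
qed

lemma reaction_integrand_bound:
  fixes e lam D w c p r :: real
  assumes "0 < e" "0 < lam" "0 < D" "0 < w"
  shows "(reaction_gain_deriv e w * (lam - w) - reaction_gain e w) * p\<^sup>2 - reaction_gain e w * c * r
    \<le> 3 * lam * p\<^sup>2 + D / 2 * r\<^sup>2 + 1 / (2 * D) * (w\<^sup>2 * c\<^sup>2)"
proof -
  let ?G = "reaction_gain e w" and ?G' = "reaction_gain_deriv e w"
  have G: "0 \<le> ?G" "?G \<le> w" and G': "0 \<le> ?G'" "?G' \<le> 3"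
    using reaction_gain_bounds[OF assms(1,4)] reaction_gain_deriv_bounds[OF assms(1)] by auto
  have "?G' * lam \<le> 3 * lam"
    using G'(2) assms(2) by simp
  moreover have "0 \<le> ?G' * w"
    using G'(1) assms(4) by simp
  ultimately have "?G' * (lam - w) - ?G \<le> 3 * lam"
    using G(1) by (simp add: right_diff_distrib)
  then have growth: "(?G' * (lam - w) - ?G) * p\<^sup>2 \<le> 3 * lam * p\<^sup>2"
    by (rule mult_right_mono) simp
  have "D / 2 * r\<^sup>2 + 1 / (2 * D) * (?G * c)\<^sup>2 + ?G * c * r = (?G * c + D * r)\<^sup>2 / (2 * D)"
    using assms(3) by (simp add: field_simps power2_eq_square)
  moreover have "0 \<le> (?G * c + D * r)\<^sup>2 / (2 * D)"
    using assms(3) by simp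
  ultimately have young: "- (?G * c * r) \<le> D / 2 * r\<^sup>2 + 1 / (2 * D) * (?G * c)\<^sup>2"
    by linarith
  have "?G\<^sup>2 \<le> w\<^sup>2"
    using G by (simp add: power_mono)
  then have "(?G * c)\<^sup>2 \<le> w\<^sup>2 * c\<^sup>2"
    by (simp add: power_mult_distrib mult_right_mono)
  then have "1 / (2 * D) * (?G * c)\<^sup>2 \<le> 1 / (2 * D) * (w\<^sup>2 * c\<^sup>2)"
    using assms(3) by (simp add: divide_right_mono)
  with growth young show ?thesis
    by linarith
qed

lemma powr_add_pos_neq_zero: "0 < e \<Longrightarrow> y powr a + e \<noteq> 0" for y a e :: real
  by (metis add_nonneg_pos powr_ge_zero less_irrefl)

lemma continuous_on_approx_reaction [continuous_intros]:
  "continuous_on S f \<Longrightarrow> continuous_on S g \<Longrightarrow> 0 < e \<Longrightarrow> continuous_on S (\<lambda>x. approx_reaction e (f x) (g x))"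
  unfolding approx_reaction_eq by (intro continuous_intros)

lemma continuous_on_approx_flux [continuous_intros]:
  assumes "continuous_on S w" "continuous_on S wx" "continuous_on S wxxx" "continuous_on S zx"
    and "\<forall>x\<in>S. 0 < w x" "0 < e"
  shows "continuous_on S (\<lambda>x. approx_flux e alpha n D chi sg (w x) (wx x) (wxxx x) (zx x))"
  using assms powr_add_pos_neq_zero[OF \<open>0 < e\<close>]
  by (auto simp: approx_flux_def intro!: continuous_intros)

locale neumann_profile =
  fixes lo hi :: real and w wx wxx wxxx :: "real \<Rightarrow> real"
  assumes lo_less_hi: "lo < hi"
    and w_pos: "\<And>x. x \<in> {lo..hi} \<Longrightarrow> 0 < w x"
    and w_deriv: "\<And>x. x \<in> {lo..hi} \<Longrightarrow> (w has_real_derivative wx x) (at x within {lo..hi})"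
    and wx_deriv: "\<And>x. x \<in> {lo..hi} \<Longrightarrow> (wx has_real_derivative wxx x) (at x within {lo..hi})"
    and wxx_deriv: "\<And>x. x \<in> {lo..hi} \<Longrightarrow> (wxx has_real_derivative wxxx x) (at x within {lo..hi})"
    and wxxx_cont: "continuous_on {lo..hi} wxxx"
    and wx_boundary: "wx lo = 0" "wx hi = 0"
    and wxxx_boundary: "wxxx lo = 0" "wxxx hi = 0"
begin

lemma w_cont: "continuous_on {lo..hi} w"
  and wx_cont: "continuous_on {lo..hi} wx"
  and wxx_cont: "continuous_on {lo..hi} wxx"
  unfolding continuous_on_eq_continuous_within
  using w_deriv wx_deriv wxx_deriv by (blast intro: DERIV_continuous)+

lemma w_deriv_at: "x \<in> {lo<..<hi} \<Longrightarrow> (w has_real_derivative wx x) (at x)"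
  and wx_deriv_at: "x \<in> {lo<..<hi} \<Longrightarrow> (wx has_real_derivative wxx x) (at x)"
  and wxx_deriv_at: "x \<in> {lo<..<hi} \<Longrightarrow> (wxx has_real_derivative wxxx x) (at x)"
  using w_deriv[of x] wx_deriv[of x] wxx_deriv[of x] by (auto simp: at_within_Icc_at)

lemma w_pos_on: "\<forall>x\<in>{lo..hi}. 0 < w x" and w_nonzero_on: "\<forall>x\<in>{lo..hi}. w x \<noteq> 0"
  using w_pos by (auto simp: less_imp_neq[symmetric])

lemmas profile_simps [simp] =
  w_cont wx_cont wxx_cont wxxx_cont w_pos_on w_nonzero_on integrable_continuous_interval

lemma integral_wxxx_mult_wx: "integral {lo..hi} (\<lambda>x. wxxx x * wx x) = - integral {lo..hi} (\<lambda>x. (wxx x)\<^sup>2)"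
  using has_integral_by_parts_vanishing_boundary[of lo hi wxx wx wxxx wxx] lo_less_hi wx_boundary
    wx_deriv_at wxx_deriv_at
  by (simp add: integral_unique power2_eq_square continuous_intros)

lemma has_real_derivative_w_powr:
  assumes "x \<in> {lo<..<hi}"
  shows "((\<lambda>x. w x powr - alpha) has_real_derivative - alpha * (w x powr - alpha / w x) * wx x) (at x)"
proof -
  have "0 < w x"
    using w_pos assms by simp
  moreover from this have "w x powr (- alpha - 1) = w x powr - alpha / w x"
    by (simp add: powr_diff abs_of_pos)
  ultimately show ?thesis
    using DERIV_fun_powr[OF w_deriv_at[OF assms], of "- alpha"] by simp
qed

lemma singular_flux_by_parts:
  "integral {lo..hi} (\<lambda>x. wxxx x * (w x powr - alpha * wx x))
    = alpha * integral {lo..hi} (\<lambda>x. w x powr - alpha * ((wx x)\<^sup>2 / w x) * wxx x)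
      - integral {lo..hi} (\<lambda>x. w x powr - alpha * (wxx x)\<^sup>2)"
proof -
  define K where "K x = w x powr - alpha * ((wx x)\<^sup>2 / w x) * wxx x" for x
  define J where "J x = w x powr - alpha * (wxx x)\<^sup>2" for x
  have [simp]: "continuous_on {lo..hi} K" "continuous_on {lo..hi} J"
    by (auto simp: K_def J_def intro!: continuous_intros)
  have "((\<lambda>x. wxxx x * (w x powr - alpha * wx x)) has_integral
      - integral {lo..hi} (\<lambda>x. wxx x * (- alpha * (w x powr - alpha / w x) * wx x * wx x + wxx x * w x powr - alpha)))
      {lo..hi}"
  proof (rule has_integral_by_parts_vanishing_boundary)
    fix x assume x: "x \<in> {lo<..<hi}"
    show "((\<lambda>x. w x powr - alpha * wx x) has_real_derivative
        - alpha * (w x powr - alpha / w x) * wx x * wx x + wxx x * w x powr - alpha) (at x)"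
      by (rule DERIV_mult[OF has_real_derivative_w_powr[OF x] wx_deriv_at[OF x]])
  qed (use lo_less_hi wx_boundary wxx_deriv_at in
       \<open>auto intro!: integrable_continuous_interval continuous_intros\<close>)
  moreover have "(\<lambda>x. wxx x * (- alpha * (w x powr - alpha / w x) * wx x * wx x + wxx x * w x powr - alpha))
      = (\<lambda>x. - alpha * K x + J x)"
    by (auto simp: K_def J_def power2_eq_square algebra_simps)
  ultimately have "((\<lambda>x. wxxx x * (w x powr - alpha * wx x)) has_integral
      alpha * integral {lo..hi} K - integral {lo..hi} J) {lo..hi}"
    by (simp add: integral_diff continuous_intros)
  then show ?thesis
    unfolding K_def[abs_def] J_def[abs_def] by (rule integral_unique)
qed

lemma cubic_flux_by_parts:
  "3 * integral {lo..hi} (\<lambda>x. w x powr - alpha * ((wx x)\<^sup>2 / w x) * wxx x)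
    = (alpha + 1) * integral {lo..hi} (\<lambda>x. w x powr - alpha * ((wx x)\<^sup>2 / w x)\<^sup>2)"
proof -
  define K where "K x = w x powr - alpha * ((wx x)\<^sup>2 / w x) * wxx x" for x
  define I where "I x = w x powr - alpha * ((wx x)\<^sup>2 / w x)\<^sup>2" for x
  have "((\<lambda>x. (3 * (wx x)\<^sup>2 * wxx x) * (w x powr - alpha / w x)) has_integral
      - integral {lo..hi} (\<lambda>x. wx x ^ 3 * (- (alpha + 1) * (w x powr - alpha / (w x)\<^sup>2) * wx x))) {lo..hi}"
  proof (rule has_integral_by_parts_vanishing_boundary)
    fix x assume x: "x \<in> {lo<..<hi}"
    show "((\<lambda>x. w x powr - alpha / w x) has_real_derivative
        - (alpha + 1) * (w x powr - alpha / (w x)\<^sup>2) * wx x) (at x)"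
      using w_pos[of x] x
      by (intro DERIV_cong[OF DERIV_divide[OF has_real_derivative_w_powr[OF x] w_deriv_at[OF x]]])
         (auto simp: field_simps power2_eq_square)
    show "((\<lambda>x. wx x ^ 3) has_real_derivative 3 * (wx x)\<^sup>2 * wxx x) (at x)"
      using x by (auto intro!: derivative_eq_intros wx_deriv_at simp: power2_eq_square)
  qed (use lo_less_hi wx_boundary in \<open>auto intro!: integrable_continuous_interval continuous_intros\<close>)
  moreover have "(\<lambda>x. (3 * (wx x)\<^sup>2 * wxx x) * (w x powr - alpha / w x)) = (\<lambda>x. 3 * K x)"
    by (auto simp: K_def)
  moreover have "(\<lambda>x. wx x ^ 3 * (- (alpha + 1) * (w x powr - alpha / (w x)\<^sup>2) * wx x))
      = (\<lambda>x. - ((alpha + 1) * I x))"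
    by (rule ext) (simp add: I_def field_split_simps power2_eq_square power3_eq_cube)
  ultimately have "((\<lambda>x. 3 * K x) has_integral (alpha + 1) * integral {lo..hi} I) {lo..hi}"
    by (simp add: integral_neg)
  from integral_unique[OF this] have "3 * integral {lo..hi} K = (alpha + 1) * integral {lo..hi} I"
    by simp
  then show ?thesis
    unfolding K_def[abs_def] I_def[abs_def] .
qed

lemma singular_diffusion_dissipative:
  assumes "0 < alpha" "alpha \<le> 1/2"
  shows "integral {lo..hi} (\<lambda>x. wxxx x * (w x powr - alpha * wx x)) \<le> 0"
proof -
  define q where "q x = (wx x)\<^sup>2 / w x" for x
  define K where "K x = w x powr - alpha * q x * wxx x" for x
  define J where "J x = w x powr - alpha * (wxx x)\<^sup>2" for x
  define I where "I x = w x powr - alpha * (q x)\<^sup>2" for x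
  define \<beta> where "\<beta> = (alpha + 1) / 3"
  have [simp]: "continuous_on {lo..hi} K" "continuous_on {lo..hi} J" "continuous_on {lo..hi} I"
    by (auto simp: K_def J_def I_def q_def intro!: continuous_intros)
  have "0 \<le> integral {lo..hi} (\<lambda>x. w x powr - alpha * (wxx x - \<beta> * q x)\<^sup>2)"
    by (rule integral_nonneg) (auto simp: q_def intro!: integrable_continuous_interval continuous_intros)
  also have "(\<lambda>x. w x powr - alpha * (wxx x - \<beta> * q x)\<^sup>2) = (\<lambda>x. J x - 2 * \<beta> * K x + \<beta>\<^sup>2 * I x)"
    by (auto simp: J_def K_def I_def power2_eq_square algebra_simps)
  also have "integral {lo..hi} \<dots> = integral {lo..hi} J - 2 * \<beta> * integral {lo..hi} K
      + \<beta>\<^sup>2 * integral {lo..hi} I"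
    by (simp add: integral_add integral_diff continuous_intros)
  also have "\<beta>\<^sup>2 * integral {lo..hi} I = \<beta> * integral {lo..hi} K"
    using cubic_flux_by_parts[of alpha, folded q_def, folded K_def I_def]
    by (simp add: \<beta>_def power2_eq_square)
  finally have "\<beta> * integral {lo..hi} K \<le> integral {lo..hi} J"
    by simp
  moreover have "0 \<le> integral {lo..hi} J"
    by (rule integral_nonneg) (simp, simp add: J_def)
  moreover have "alpha \<le> \<beta>"
    using assms by (simp add: \<beta>_def)
  ultimately have "alpha * integral {lo..hi} K \<le> integral {lo..hi} J"
  proof (cases "0 \<le> integral {lo..hi} K")
    case True
    then have "alpha * integral {lo..hi} K \<le> \<beta> * integral {lo..hi} K"
      using \<open>alpha \<le> \<beta>\<close> by (rule mult_right_mono[rotated])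
    with \<open>\<beta> * integral {lo..hi} K \<le> integral {lo..hi} J\<close> show ?thesis
      by linarith
  next
    case False
    then have "alpha * integral {lo..hi} K \<le> 0"
      using \<open>0 < alpha\<close> by (simp add: mult_nonneg_nonpos)
    with \<open>0 \<le> integral {lo..hi} J\<close> show ?thesis
      by linarith
  qed
  then show ?thesis
    using singular_flux_by_parts[of alpha, folded q_def, folded K_def J_def] by simp
qed

lemma integral_deriv_mult_wxx:
  assumes "continuous_on {lo..hi} g" "\<And>x. x \<in> {lo<..<hi} \<Longrightarrow> g differentiable (at x)"
    and "g lo = 0" "g hi = 0"
  shows "integral {lo..hi} (\<lambda>x. deriv g x * wxx x) = - integral {lo..hi} (\<lambda>x. g x * wxxx x)"
proof -
  have "((\<lambda>x. deriv g x * wxx x) has_integral - integral {lo..hi} (\<lambda>x. g x * wxxx x)) {lo..hi}"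
    using assms lo_less_hi wxx_deriv_at
    by (intro has_integral_by_parts_vanishing_boundary)
       (auto simp: DERIV_deriv_iff_real_differentiable intro!: integrable_continuous_interval continuous_intros)
  then show ?thesis
    by (rule integral_unique)
qed

lemma reaction_by_parts:
  assumes "0 < e"
  shows "integral {lo..hi} (\<lambda>x. reaction_gain e (w x) * (lam - w x) * wxx x)
    = - integral {lo..hi} (\<lambda>x. (reaction_gain_deriv e (w x) * (lam - w x) - reaction_gain e (w x)) * (wx x)\<^sup>2)"
proof -
  have "((\<lambda>x. wxx x * (reaction_gain e (w x) * (lam - w x))) has_integral
      - integral {lo..hi} (\<lambda>x. wx x * ((reaction_gain_deriv e (w x) * (lam - w x) - reaction_gain e (w x)) * wx x)))
      {lo..hi}"
  proof (rule has_integral_by_parts_vanishing_boundary)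
    fix x assume x: "x \<in> {lo<..<hi}"
    show "(wx has_real_derivative wxx x) (at x)"
      using x by (rule wx_deriv_at)
    show "((\<lambda>x. reaction_gain e (w x) * (lam - w x)) has_real_derivative
        (reaction_gain_deriv e (w x) * (lam - w x) - reaction_gain e (w x)) * wx x) (at x)"
      by (rule DERIV_cong, rule DERIV_mult[OF DERIV_chain2[OF has_real_derivative_reaction_gain[OF assms]
            w_deriv_at[OF x]] DERIV_diff[OF DERIV_const w_deriv_at[OF x]]]) (simp add: algebra_simps)
  qed (use assms lo_less_hi wx_boundary in \<open>auto intro!: integrable_continuous_interval continuous_intros\<close>)
  then show ?thesis
    by (simp add: integral_unique power2_eq_square mult_ac)
qed

lemma reaction_energy_bound:
  assumes "0 < e" "0 < lam" "0 < D" "continuous_on {lo..hi} c"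
  shows "- integral {lo..hi} (\<lambda>x. approx_reaction e (w x) (lam - w x + c x) * wxx x)
    \<le> 3 * lam * integral {lo..hi} (\<lambda>x. (wx x)\<^sup>2) + D / 2 * integral {lo..hi} (\<lambda>x. (wxx x)\<^sup>2)
      + 1 / (2 * D) * integral {lo..hi} (\<lambda>x. (w x)\<^sup>2 * (c x)\<^sup>2)"
proof -
  define G where "G x = reaction_gain e (w x)" for x
  define G' where "G' x = reaction_gain_deriv e (w x)" for x
  have [simp]: "continuous_on {lo..hi} G" "continuous_on {lo..hi} G'" "continuous_on {lo..hi} c"
    using assms by (auto simp: G_def G'_def intro!: continuous_intros)
  have "(\<lambda>x. approx_reaction e (w x) (lam - w x + c x) * wxx x)
      = (\<lambda>x. G x * (lam - w x) * wxx x + G x * c x * wxx x)"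
    by (auto simp: approx_reaction_eq G_def algebra_simps)
  then have "- integral {lo..hi} (\<lambda>x. approx_reaction e (w x) (lam - w x + c x) * wxx x)
      = - integral {lo..hi} (\<lambda>x. G x * (lam - w x) * wxx x) - integral {lo..hi} (\<lambda>x. G x * c x * wxx x)"
    by (simp add: integral_add continuous_intros)
  also have "\<dots> = integral {lo..hi} (\<lambda>x. (G' x * (lam - w x) - G x) * (wx x)\<^sup>2 - G x * c x * wxx x)"
    using reaction_by_parts[OF assms(1), of lam, folded G_def G'_def]
    by (simp add: integral_diff continuous_intros)
  also have "\<dots> \<le> integral {lo..hi} (\<lambda>x. 3 * lam * (wx x)\<^sup>2 + D / 2 * (wxx x)\<^sup>2 + 1 / (2 * D) * ((w x)\<^sup>2 * (c x)\<^sup>2))"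
  proof (rule integral_le)
    fix x assume "x \<in> {lo..hi}"
    from reaction_integrand_bound[OF assms(1-3) w_pos[OF this]]
    show "(G' x * (lam - w x) - G x) * (wx x)\<^sup>2 - G x * c x * wxx x
        \<le> 3 * lam * (wx x)\<^sup>2 + D / 2 * (wxx x)\<^sup>2 + 1 / (2 * D) * ((w x)\<^sup>2 * (c x)\<^sup>2)"
      by (simp add: G_def G'_def)
  qed (use assms(3) in \<open>auto intro!: integrable_continuous_interval continuous_intros\<close>)
  also have "\<dots> = 3 * lam * integral {lo..hi} (\<lambda>x. (wx x)\<^sup>2) + D / 2 * integral {lo..hi} (\<lambda>x. (wxx x)\<^sup>2)
      + 1 / (2 * D) * integral {lo..hi} (\<lambda>x. (w x)\<^sup>2 * (c x)\<^sup>2)"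
    using assms(3) by (simp add: integral_add continuous_intros)
  finally show ?thesis .
qed

lemma integral_flux_mult_wxxx:
  assumes "0 < e" "continuous_on {lo..hi} zx"
  shows "integral {lo..hi} (\<lambda>x. approx_flux e alpha n D chi sg (w x) (wx x) (wxxx x) (zx x) * wxxx x)
    = - e * integral {lo..hi} (\<lambda>x. w x ^ 4 / (w x powr (4 - n) + e) * (wxxx x)\<^sup>2)
      + e powr (alpha / 2) * integral {lo..hi} (\<lambda>x. wxxx x * (w x powr - alpha * wx x))
      + D * integral {lo..hi} (\<lambda>x. wxxx x * wx x)
      + sg * chi * integral {lo..hi} (\<lambda>x. w x powr (5 - n) / (w x powr (4 - n) + e) * zx x * wxxx x)"
proof -
  define A where "A x = w x ^ 4 / (w x powr (4 - n) + e)" for x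
  define B where "B x = w x powr (5 - n) / (w x powr (4 - n) + e) * zx x" for x
  have [simp]: "continuous_on {lo..hi} A" "continuous_on {lo..hi} B"
    using assms powr_add_pos_neq_zero by (auto simp: A_def B_def intro!: continuous_intros)
  have "(\<lambda>x. approx_flux e alpha n D chi sg (w x) (wx x) (wxxx x) (zx x) * wxxx x)
      = (\<lambda>x. - e * (A x * (wxxx x)\<^sup>2) + e powr (alpha / 2) * (wxxx x * (w x powr - alpha * wx x))
          + D * (wxxx x * wx x) + sg * chi * (B x * wxxx x))"
    by (auto simp: A_def B_def approx_flux_def power2_eq_square algebra_simps)
  then have "integral {lo..hi} (\<lambda>x. approx_flux e alpha n D chi sg (w x) (wx x) (wxxx x) (zx x) * wxxx x)
      = - e * integral {lo..hi} (\<lambda>x. A x * (wxxx x)\<^sup>2)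
        + e powr (alpha / 2) * integral {lo..hi} (\<lambda>x. wxxx x * (w x powr - alpha * wx x))
        + D * integral {lo..hi} (\<lambda>x. wxxx x * wx x) + sg * chi * integral {lo..hi} (\<lambda>x. B x * wxxx x)"
    by (simp add: integral_add integral_diff continuous_intros)
  then show ?thesis
    unfolding A_def B_def .
qed

lemma integral_wt_mult_wxx:
  assumes "0 < e" "continuous_on {lo..hi} zx" "zx lo = 0" "zx hi = 0" "continuous_on {lo..hi} c"
    and equation: "\<And>x. x \<in> {lo<..<hi} \<Longrightarrow>
      ((\<lambda>y. approx_flux e alpha n D chi sg (w y) (wx y) (wxxx y) (zx y)) has_real_derivative
        wt x - approx_reaction e (w x) (lam - w x + c x)) (at x)"
  shows "integral {lo..hi} (\<lambda>x. wt x * wxx x)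
    = - integral {lo..hi} (\<lambda>x. approx_flux e alpha n D chi sg (w x) (wx x) (wxxx x) (zx x) * wxxx x)
      + integral {lo..hi} (\<lambda>x. approx_reaction e (w x) (lam - w x + c x) * wxx x)"
proof -
  define F where "F x = approx_flux e alpha n D chi sg (w x) (wx x) (wxxx x) (zx x)" for x
  define R where "R x = approx_reaction e (w x) (lam - w x + c x)" for x
  have [simp]: "continuous_on {lo..hi} F" "continuous_on {lo..hi} R"
    using assms by (auto simp: F_def R_def intro!: continuous_intros)
  have by_parts: "((\<lambda>x. (wt x - R x) * wxx x) has_integral - integral {lo..hi} (\<lambda>x. F x * wxxx x)) {lo..hi}"
  proof (rule has_integral_by_parts_vanishing_boundary)
    show "(F has_real_derivative wt x - R x) (at x)" if "x \<in> {lo<..<hi}" for x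
      using equation[OF that] by (simp add: F_def[abs_def] R_def)
    show "F lo * wxx lo = 0" "F hi * wxx hi = 0"
      using assms(3,4) wx_boundary wxxx_boundary by (simp_all add: F_def approx_flux_def)
  qed (use lo_less_hi wxx_deriv_at in \<open>auto intro!: integrable_continuous_interval continuous_intros\<close>)
  have "integral {lo..hi} (\<lambda>x. wt x * wxx x)
      = integral {lo..hi} (\<lambda>x. (wt x - R x) * wxx x) + integral {lo..hi} (\<lambda>x. R x * wxx x)"
    using has_integral_integrable[OF by_parts]
    by (simp add: integral_add[symmetric] continuous_intros algebra_simps)
  also have "integral {lo..hi} (\<lambda>x. (wt x - R x) * wxx x) = - integral {lo..hi} (\<lambda>x. F x * wxxx x)"
    using by_parts by (rule integral_unique)
  finally have "integral {lo..hi} (\<lambda>x. wt x * wxx x)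
      = - integral {lo..hi} (\<lambda>x. F x * wxxx x) + integral {lo..hi} (\<lambda>x. R x * wxx x)" .
  then show ?thesis
    unfolding F_def R_def .
qed

lemma energy_estimate:
  assumes "0 < e" "0 < alpha" "alpha \<le> 1/2" "0 < D" "0 < lam"
    and zx_deriv: "\<And>x. x \<in> {lo..hi} \<Longrightarrow> (zx has_real_derivative zxx x) (at x within {lo..hi})"
    and zx_boundary: "zx lo = 0" "zx hi = 0"
    and c_cont: "continuous_on {lo..hi} c"
    and equation: "\<And>x. x \<in> {lo<..<hi} \<Longrightarrow>
      ((\<lambda>y. approx_flux e alpha n D chi sg (w y) (wx y) (wxxx y) (zx y)) has_real_derivative
        wt x - approx_reaction e (w x) (lam - w x + c x)) (at x)"
  shows "- integral {lo..hi} (\<lambda>x. wt x * wxx x)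
      + e * integral {lo..hi} (\<lambda>x. w x ^ 4 / (w x powr (4 - n) + e) * (wxxx x)\<^sup>2)
      + D / 2 * integral {lo..hi} (\<lambda>x. (wxx x)\<^sup>2)
    \<le> - sg * chi * integral {lo..hi} (\<lambda>x. deriv (\<lambda>y. w y powr (5 - n) / (w y powr (4 - n) + e) * zx y) x * wxx x)
      + 3 * lam * integral {lo..hi} (\<lambda>x. (wx x)\<^sup>2)
      + 1 / (2 * D) * integral {lo..hi} (\<lambda>x. (w x)\<^sup>2 * (c x)\<^sup>2)"
proof -
  define B where "B = (\<lambda>y. w y powr (5 - n) / (w y powr (4 - n) + e) * zx y)"
  note denominator = powr_add_pos_neq_zero[OF \<open>0 < e\<close>]
  have zx_cont: "continuous_on {lo..hi} zx"
    unfolding continuous_on_eq_continuous_within using zx_deriv by (blast intro: DERIV_continuous)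
  have "integral {lo..hi} (\<lambda>x. B x * wxxx x) = - integral {lo..hi} (\<lambda>x. deriv B x * wxx x)"
  proof (subst integral_deriv_mult_wxx)
    show "continuous_on {lo..hi} B"
      using zx_cont denominator by (auto simp: B_def intro!: continuous_intros)
    show "B differentiable (at x)" if "x \<in> {lo<..<hi}" for x
      unfolding real_differentiable_def B_def
      using that w_pos[of x] denominator zx_deriv[of x]
      by (auto simp: at_within_Icc_at intro!: derivative_eq_intros w_deriv_at exI)
  qed (use zx_boundary in \<open>simp_all add: B_def\<close>)
  then have "sg * chi * integral {lo..hi} (\<lambda>x. w x powr (5 - n) / (w x powr (4 - n) + e) * zx x * wxxx x)
      = - sg * chi * integral {lo..hi} (\<lambda>x. deriv B x * wxx x)"
    by (simp add: B_def)
  moreover have "e powr (alpha / 2) * integral {lo..hi} (\<lambda>x. wxxx x * (w x powr - alpha * wx x)) \<le> 0"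
    using singular_diffusion_dissipative[OF \<open>0 < alpha\<close> \<open>alpha \<le> 1/2\<close>] by (simp add: mult_nonneg_nonpos)
  moreover have "D * integral {lo..hi} (\<lambda>x. wxxx x * wx x) = - (D * integral {lo..hi} (\<lambda>x. (wxx x)\<^sup>2))"
    by (simp add: integral_wxxx_mult_wx)
  ultimately show ?thesis
    unfolding B_def
    using integral_wt_mult_wxx[OF \<open>0 < e\<close> zx_cont zx_boundary c_cont equation]
      integral_flux_mult_wxxx[OF \<open>0 < e\<close> zx_cont, of alpha n D chi sg]
      reaction_energy_bound[OF \<open>0 < e\<close> \<open>0 < lam\<close> \<open>0 < D\<close> c_cont]
    by linarith
qed

end

lemma C41_on_slice_continuous:
  assumes "C41_on lo hi T f fx fxx fxxx fxxxx ft" "t \<in> {0<..<T}"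
  shows "continuous_on {lo..hi} (\<lambda>x. f x t)"
proof -
  have "((\<lambda>y. f y t) has_real_derivative fx x t) (at x within {lo..hi})" if "x \<in> {lo..hi}" for x
    using assms that unfolding C41_on_def by blast
  then show ?thesis
    unfolding continuous_on_eq_continuous_within by (blast intro: DERIV_continuous)
qed

lemma component_energy_inequality:
  fixes w wx wxx wxxx wxxxx wt z zx zxx zxxx zxxxx zt :: "real \<Rightarrow> real \<Rightarrow> real" and c :: "real \<Rightarrow> real"
  assumes "lo < hi" "0 < e" "0 < alpha" "alpha \<le> 1/2" "0 < D" "0 < lam" "0 < t" "t < T"
    and w_C41: "C41_on lo hi T w wx wxx wxxx wxxxx wt"
    and z_C41: "C41_on lo hi T z zx zxx zxxx zxxxx zt"
    and w_pos: "\<And>x. x \<in> {lo..hi} \<Longrightarrow> 0 < w x t"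
    and w_boundary: "\<And>s. s \<in> {0<..<T} \<Longrightarrow> wx lo s = 0 \<and> wx hi s = 0 \<and> wxxx lo s = 0 \<and> wxxx hi s = 0"
    and z_boundary: "zx lo t = 0" "zx hi t = 0"
    and c_cont: "continuous_on {lo..hi} c"
    and equation: "\<And>x. x \<in> {lo<..<hi} \<Longrightarrow>
      ((\<lambda>y. approx_flux e alpha n D chi sg (w y t) (wx y t) (wxxx y t) (zx y t)) has_real_derivative
        wt x t - approx_reaction e (w x t) (lam - w x t + c x)) (at x)"
  shows "\<exists>Dw. ((\<lambda>s. integral {lo..hi} (\<lambda>x. (wx x s)\<^sup>2)) has_real_derivative Dw) (at t) \<and>
      Dw / 2 + e * integral {lo..hi} (\<lambda>x. (w x t) ^ 4 / ((w x t) powr (4 - n) + e) * (wxxx x t)\<^sup>2)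
        + D / 2 * integral {lo..hi} (\<lambda>x. (wxx x t)\<^sup>2)
      \<le> - sg * chi * integral {lo..hi}
            (\<lambda>x. deriv (\<lambda>y. (w y t) powr (5 - n) / ((w y t) powr (4 - n) + e) * zx y t) x * wxx x t)
        + 3 * lam * integral {lo..hi} (\<lambda>x. (wx x t)\<^sup>2)
        + 1 / (2 * D) * integral {lo..hi} (\<lambda>x. (w x t)\<^sup>2 * (c x)\<^sup>2)"
proof -
  have t: "t \<in> {0<..<T}"
    using assms by simp
  have energy_derivative: "((\<lambda>s. integral {lo..hi} (\<lambda>x. (wx x s)\<^sup>2)) has_real_derivative
      - 2 * integral {lo..hi} (\<lambda>x. wt x t * wxx x t)) (at t)"
    by (rule Dirichlet_energy_has_real_derivative[where U = "{0<..<T}" and u = w and ux = wx and uxx = wxx])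
       (use assms(1) t w_C41 w_boundary in \<open>auto simp: C41_on_def\<close>)
  have w_slice: "((\<lambda>y. w y t) has_real_derivative wx x t) (at x within {lo..hi})"
      "((\<lambda>y. wx y t) has_real_derivative wxx x t) (at x within {lo..hi})"
      "((\<lambda>y. wxx y t) has_real_derivative wxxx x t) (at x within {lo..hi})"
      "((\<lambda>y. wxxx y t) has_real_derivative wxxxx x t) (at x within {lo..hi})"
    if "x \<in> {lo..hi}" for x
    using w_C41 t that unfolding C41_on_def by blast+
  have "continuous_on {lo..hi} (\<lambda>x. wxxx x t)"
    unfolding continuous_on_eq_continuous_within using w_slice(4) by (blast intro: DERIV_continuous)
  interpret neumann_profile lo hi "\<lambda>x. w x t" "\<lambda>x. wx x t" "\<lambda>x. wxx x t" "\<lambda>x. wxxx x t"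
    by unfold_locales (use assms(1) w_pos w_slice(1-3) \<open>continuous_on {lo..hi} (\<lambda>x. wxxx x t)\<close>
        w_boundary[OF t] in auto)
  have "((\<lambda>x. zx x t) has_real_derivative zxx x t) (at x within {lo..hi})" if "x \<in> {lo..hi}" for x
    using z_C41 t that by (simp add: C41_on_def)
  note estimate = energy_estimate[OF assms(2-6) this z_boundary c_cont equation]
  have half: "- 2 * integral {lo..hi} (\<lambda>x. wt x t * wxx x t) / 2 = - integral {lo..hi} (\<lambda>x. wt x t * wxx x t)"
    by simp
  show ?thesis
    by (intro exI[of _ "- 2 * integral {lo..hi} (\<lambda>x. wt x t * wxx x t)"] conjI energy_derivative)
       (simp only: half estimate)
qed

theorem lemma2p5:
  fixes lo hi alpha D1 D2 a1 a2 lam1 lam2 chi1 chi2 n1 n2 e T :: real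
    and u0 v0 u0' v0' :: "real \<Rightarrow> real"
    and u0e v0e :: "real \<Rightarrow> real \<Rightarrow> real"
    and u ux uxx uxxx uxxxx ut v vx vxx vxxx vxxxx vt :: "real \<Rightarrow> real \<Rightarrow> real"
  assumes "lo < hi"
    and "D1 > 0" "D2 > 0" "a1 > 0" "a2 > 0" "lam1 > 0" "lam2 > 0" "chi1 > 0" "chi2 > 0"
    and "0 < alpha" "alpha \<le> 1/2"
    and "0 < n1" "n1 < 4" "0 < n2" "n2 < 4"
    and "IE_component lo hi u0 u0' u0e" "IE_component lo hi v0 v0' v0e"
    and "0 < e" "e < 1"
    and "T > 0"
    and "approx_solution lo hi alpha e n1 n2 D1 D2 a1 a2 lam1 lam2 chi1 chi2 T (u0e e) (v0e e)
           u ux uxx uxxx uxxxx ut v vx vxx vxxx vxxxx vt"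
    and "0 < t" "t < T"
  shows "(\<exists>Du. ((\<lambda>s. integral {lo..hi} (\<lambda>x. (ux x s)\<^sup>2)) has_real_derivative Du) (at t) \<and>
            Du / 2
            + e * integral {lo..hi} (\<lambda>x. (u x t) ^ 4 / ((u x t) powr (4 - n1) + e) * (uxxx x t)\<^sup>2)
            + D1 / 2 * integral {lo..hi} (\<lambda>x. (uxx x t)\<^sup>2)
          \<le> chi1 * integral {lo..hi} (\<lambda>x.
                deriv (\<lambda>y. (u y t) powr (5 - n1) / ((u y t) powr (4 - n1) + e) * vx y t) x
                * uxx x t)
            + 3 * lam1 * integral {lo..hi} (\<lambda>x. (ux x t)\<^sup>2)
            + a1\<^sup>2 / (2 * D1) * integral {lo..hi} (\<lambda>x. (u x t)\<^sup>2 * (v x t)\<^sup>2))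
       \<and> (\<exists>Dv. ((\<lambda>s. integral {lo..hi} (\<lambda>x. (vx x s)\<^sup>2)) has_real_derivative Dv) (at t) \<and>
            Dv / 2
            + e * integral {lo..hi} (\<lambda>x. (v x t) ^ 4 / ((v x t) powr (4 - n2) + e) * (vxxx x t)\<^sup>2)
            + D2 / 2 * integral {lo..hi} (\<lambda>x. (vxx x t)\<^sup>2)
          \<le> - chi2 * integral {lo..hi} (\<lambda>x.
                deriv (\<lambda>y. (v y t) powr (5 - n2) / ((v y t) powr (4 - n2) + e) * ux y t) x
                * vxx x t)
            + 3 * lam2 * integral {lo..hi} (\<lambda>x. (vx x t)\<^sup>2)
            + a2\<^sup>2 / (2 * D2) * integral {lo..hi} (\<lambda>x. (u x t)\<^sup>2 * (v x t)\<^sup>2))"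
proof -
  have u_coefficient: "a1\<^sup>2 / (2 * D1) * integral {lo..hi} (\<lambda>x. (u x t)\<^sup>2 * (v x t)\<^sup>2)
      = 1 / (2 * D1) * integral {lo..hi} (\<lambda>x. (u x t)\<^sup>2 * (a1 * v x t)\<^sup>2)"
  proof -
    have "(\<lambda>x. (u x t)\<^sup>2 * (a1 * v x t)\<^sup>2) = (\<lambda>x. a1\<^sup>2 * ((u x t)\<^sup>2 * (v x t)\<^sup>2))"
      by (simp add: power_mult_distrib mult_ac)
    then show ?thesis
      by simp
  qed
  have v_coefficient: "a2\<^sup>2 / (2 * D2) * integral {lo..hi} (\<lambda>x. (u x t)\<^sup>2 * (v x t)\<^sup>2)
      = 1 / (2 * D2) * integral {lo..hi} (\<lambda>x. (v x t)\<^sup>2 * (- (a2 * u x t))\<^sup>2)"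
  proof -
    have "(\<lambda>x. (v x t)\<^sup>2 * (- (a2 * u x t))\<^sup>2) = (\<lambda>x. a2\<^sup>2 * ((u x t)\<^sup>2 * (v x t)\<^sup>2))"
      by (simp add: power_mult_distrib mult_ac)
    then show ?thesis
      by simp
  qed
  (* the flux signs are sg = -1 for u and sg = 1 for v *)
  have u_sign: "chi1 = - (-1) * chi1" and v_sign: "- chi2 = - 1 * chi2"
    by simp_all
  show ?thesis
    unfolding u_coefficient v_coefficient
  proof (subst u_sign, subst v_sign, intro conjI component_energy_inequality[OF assms(1,18,10,11,2,6,22,23)]
      component_energy_inequality[OF assms(1,18,10,11,3,7,22,23)])
  qed (use assms(21-23) C41_on_slice_continuous in \<open>auto simp: approx_solution_def intro!: continuous_intros\<close>)
qed

end
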